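(* For all planar forests $F,G$: $F\leq G$ if and only if $m(G)\leq m(F)$.
   Context: Planar rooted trees have their children linearly ordered left to right; $\mathbf{F}$ is the set of planar forests (finite, possibly empty, sequences $t_1\cdots t_n$ of planar rooted trees; $1$ = empty forest; product = concatenation). $B^+(F)$ is the tree obtained by grafting the trees of $F$ on a new common root. $m:\mathbf{F}\to\mathbf{F}$ is the map defined recursively by $m(1)=1$ and $m(B^+(F_1)F_2)=B^+(m(F_2))m(F_1)$. Order on $\mathbf{F}$: an admissible transformation of a forest: choose a vertex $s$ which is the leftmost child of its parent $u$; if $u$ is not a root, with parent $r$, move the subtree rooted at $s$ to become a child of $r$ immediately to the left of $u$; if $u$ is a root, move the subtree rooted at $s$ to become a new tree of the forest immediately to the left of the tree of $u$; everything else unchanged. $F\leq G$ iff $G$ is obtained from $F$ by a finite (possibly empty) sequence of admissible transformations. *)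

theory Defs
  imports Main
begin

text \<open>A planar forest is a list of planar trees; the empty list is the empty forest 1,
  and the product of forests is list concatenation.\<close>
datatype ptree = Node "ptree list"

type_synonym pforest = "ptree list"

definition Bplus :: "pforest \<Rightarrow> ptree" where
  "Bplus F = Node F"

fun m :: "pforest \<Rightarrow> pforest" where
  "m [] = []"
| "m (Node F1 # F2) = Bplus (m F2) # m F1"

text \<open>The basic move acts on the ordered list of
  children of a vertex r (or on the list of roots of the forest): a vertex u in
  that list whose leftmost child is s gets the subtree rooted at s detached and
  inserted immediately to the left of u.\<close>
inductive adm_step :: "pforest \<Rightarrow> pforest \<Rightarrow> bool" where
  move: "adm_step (L1 @ Node (s # C) # L2) (L1 @ s # Node C # L2)"
| inside: "adm_step A B \<Longrightarrow> adm_step (L1 @ Node A # L2) (L1 @ Node B # L2)"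

definition forest_le :: "pforest \<Rightarrow> pforest \<Rightarrow> bool" where
  "forest_le F G \<longleftrightarrow> adm_step\<^sup>*\<^sup>* F G"

end

theory Submission
  imports Defs
begin

text \<open>The map m is an involution that reverses every admissible transformation. To see this,
  describe a transformation recursively: either the leftmost child of the first root becomes a
  new tree in front of it, or the transformation happens inside the first tree, or inside the
  remaining trees. Under m the last two kinds are exchanged, since m sends the children of the
  first root to the trees after it and vice versa, and the first kind turns into its own reverse:
  m maps B+(B+(S) C) L to B+(m L) B+(m C) m S and B+(S) B+(C) L to
  B+(B+(m L) m C) m S.\<close>

inductive head_step :: "pforest \<Rightarrow> pforest \<Rightarrow> bool" where
  rotate: "head_step (Node (Node S # C) # L) (Node S # Node C # L)"
| first: "head_step A B \<Longrightarrow> head_step (Node A # L) (Node B # L)"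
| rest: "head_step A B \<Longrightarrow> head_step (x # A) (x # B)"

lemma head_step_append_left: "head_step A B \<Longrightarrow> head_step (L @ A) (L @ B)"
  by (induction L) (auto intro: head_step.rest)

lemma adm_step_Cons: "adm_step A B \<Longrightarrow> adm_step (x # A) (x # B)"
proof (induction rule: adm_step.cases)
  case (move L1 s C L2)
  then show ?case using adm_step.move[of "x # L1" s C L2] by simp
next
  case (inside A' B' L1 L2)
  then show ?case using adm_step.inside[of A' B' "x # L1" L2] by simp
qed

lemma adm_step_iff_head_step: "adm_step F G \<longleftrightarrow> head_step F G"
proof
  show "adm_step F G \<Longrightarrow> head_step F G"
  proof (induction rule: adm_step.induct)
    case (move L1 s C L2)
    obtain S where "s = Node S" by (cases s)
    then show ?case using head_step_append_left[OF head_step.rotate] by simp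
  next
    case (inside A B L1 L2)
    then show ?case using head_step_append_left[OF head_step.first] by simp
  qed
next
  show "head_step F G \<Longrightarrow> adm_step F G"
  proof (induction rule: head_step.induct)
    case (rotate S C L)
    then show ?case using adm_step.move[of "[]" "Node S" C L] by simp
  next
    case (first A B L)
    then show ?case using adm_step.inside[of A B "[]" L] by simp
  next
    case (rest A B x)
    then show ?case using adm_step_Cons by blast
  qed
qed

lemma m_m [simp]: "m (m F) = F"
  by (induction F rule: m.induct) (auto simp: Bplus_def)

lemma head_step_m: "head_step F G \<Longrightarrow> head_step (m G) (m F)"
proof (induction rule: head_step.induct)
  case (rotate S C L)
  then show ?case using head_step.rotate[of "m L" "m C" "m S"] by (simp add: Bplus_def)
next
  case (first A B L)
  then show ?case by (simp add: Bplus_def head_step.rest)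
next
  case (rest A B x)
  then show ?case by (cases x) (simp add: Bplus_def head_step.first)
qed

lemma forest_le_m: "forest_le F G \<Longrightarrow> forest_le (m G) (m F)"
  unfolding forest_le_def
proof (induction rule: rtranclp_induct)
  case base
  then show ?case by simp
next
  case (step G H)
  then have "adm_step (m H) (m G)"
    using head_step_m by (simp add: adm_step_iff_head_step)
  with step.IH show ?case by (meson converse_rtranclp_into_rtranclp)
qed

theorem proposition36:
  fixes F G :: pforest
  shows "forest_le F G \<longleftrightarrow> forest_le (m G) (m F)"
  using forest_le_m[of F G] forest_le_m[of "m G" "m F"] by auto

end
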